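(* Let $x\in\mathbb{R}^N$, $\eta_x>0$, and let $\phi:\mathbb{R}^N\to\mathbb{R}$ satisfy hypothesis (H) at $x$ with radius $\eta_x$, with $p_x\neq0$. Then for every $\epsilon\in(0,\eta_x)$: $$\Big|\mathcal{L}_s^\epsilon[\phi](x)-\int_\epsilon^\infty L_\phi\Big(x,t\frac{p_x}{|p_x|},t\frac{p_x}{|p_x|}\Big)\mathrm{d}\mu_s(t)\Big|\le 4c_s s\,C_x\big(\eta_x^{2-2s}-\epsilon^{2-2s}\big)A_\epsilon+c_s(1-s)\Big(\eta_x^{-2s}+\frac{2s}{2s-1}\eta_x^{1-2s}\Big)\omega_\phi(A_\epsilon).$$
   Context: Fix $N\ge1$ and $s\in(\frac12,1)$. Let $C_s=\frac{4^s s\,\Gamma(\frac12+s)}{\pi^{1/2}\Gamma(1-s)}$ and $c_s=\frac{C_s}{s(1-s)}$. Let $\mu_s$ be the Borel measure on $(0,\infty)$ with $\mathrm{d}\mu_s(t)=C_s t^{-1-2s}\,\mathrm{d}t$. For $\phi:\mathbb{R}^N\to\mathbb{R}$ and $x,y,\tilde y\in\mathbb{R}^N$ let $L_\phi(x,y,\tilde y)=\phi(x+y)+\phi(x-\tilde y)-2\phi(x)$. For $\epsilon>0$ define $\mathcal{L}_s^\epsilon[\phi](x)=\sup_{|y|=1}\inf_{|\tilde y|=1}\int_\epsilon^\infty L_\phi(x,ty,t\tilde y)\,\mathrm{d}\mu_s(t)$. Hypothesis (H) at $x$ with radius $\eta_x>0$: $\phi:\mathbb{R}^N\to\mathbb{R}$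 is bounded and Borel; (i) $\phi\in C^2(\bar B_{\eta_x}(x))$, and we set $p_x=\nabla\phi(x)$, $C_x=\frac12\|\nabla^2\phi\|_{L^\infty(B_{\eta_x}(x))}$; (ii) $\phi$ is bounded and uniformly continuous on $\mathbb{R}^N\setminus\bar B_{\eta_x}(x)$, with modulus $\omega_\phi(a)=\sup\{|\phi(z)-\phi(w)|: z,w\in\mathbb{R}^N\setminus\bar B_{\eta_x}(x),\ |z-w|\le a\}$. When $p_x\ne0$ and $0<\epsilon<\eta_x$ define $$\kappa_\epsilon=\sup\Big\{a\in[0,2]:\ a^2\le\frac{8\omega_\phi(a)}{|p_x|}\cdot\frac{\frac{2s-1}{2s}\eta_x^{-2s}+\eta_x^{1-2s}}{\epsilon^{1-2s}-\eta_x^{1-2s}}\Big\},\quad A_\epsilon=\max\Big\{\frac{16C_x}{|p_x|}\cdot\frac{2s-1}{1-s}\cdot\frac{\eta_x^{2-2s}-\epsilon^{2-2s}}{\epsilon^{1-2s}-\eta_x^{1-2s}},\ \kappa_\epsilon\Big\}.$$ *)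

theory Defs
  imports "HOL-Analysis.Analysis"
begin

definition Cs :: "real \<Rightarrow> real" where
  "Cs s = 4 powr s * s * Gamma (1/2 + s) / (sqrt pi * Gamma (1 - s))"

definition cs :: "real \<Rightarrow> real" where
  "cs s = Cs s / (s * (1 - s))"

definition muS :: "real \<Rightarrow> real measure" where
  "muS s = density lborel (\<lambda>t. ennreal (indicator {(0::real)<..} t * Cs s * t powr (-1 - 2 * s)))"

definition Lphi :: "('a::euclidean_space \<Rightarrow> real) \<Rightarrow> 'a \<Rightarrow> 'a \<Rightarrow> 'a \<Rightarrow> real" where
  "Lphi \<phi> x y y' = \<phi> (x + y) + \<phi> (x - y') - 2 * \<phi> x"

definition Leps :: "real \<Rightarrow> real \<Rightarrow> ('a::euclidean_space \<Rightarrow> real) \<Rightarrow> 'a \<Rightarrow> real" where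
  "Leps s \<epsilon> \<phi> x = (SUP y\<in>sphere 0 1. INF y'\<in>sphere 0 1.
      (LINT t:{\<epsilon><..}|muS s. Lphi \<phi> x (t *\<^sub>R y) (t *\<^sub>R y')))"

definition omega :: "('a::euclidean_space \<Rightarrow> real) \<Rightarrow> 'a \<Rightarrow> real \<Rightarrow> real \<Rightarrow> real" where
  "omega \<phi> x \<eta> a = (SUP zw\<in>{(z, w). z \<in> - cball x \<eta> \<and> w \<in> - cball x \<eta> \<and> dist z w \<le> a}.
      \<bar>\<phi> (fst zw) - \<phi> (snd zw)\<bar>)"

text \<open>kappa_eps, with p = |p_x|.\<close>
definition kappa :: "real \<Rightarrow> ('a::euclidean_space \<Rightarrow> real) \<Rightarrow> 'a \<Rightarrow> real \<Rightarrow> real \<Rightarrow> real \<Rightarrow> real" where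
  "kappa s \<phi> x \<eta> p \<epsilon> = Sup {a \<in> {0..2}. a\<^sup>2 \<le> 8 * omega \<phi> x \<eta> a / p *
      (((2 * s - 1) / (2 * s) * \<eta> powr (-2 * s) + \<eta> powr (1 - 2 * s)) / (\<epsilon> powr (1 - 2 * s) - \<eta> powr (1 - 2 * s)))}"

text \<open>A_eps, with p = |p_x| and C = C_x.\<close>
definition Aeps :: "real \<Rightarrow> ('a::euclidean_space \<Rightarrow> real) \<Rightarrow> 'a \<Rightarrow> real \<Rightarrow> real \<Rightarrow> real \<Rightarrow> real \<Rightarrow> real" where
  "Aeps s \<phi> x \<eta> p C \<epsilon> = max (16 * C / p * (2 * s - 1) / (1 - s) *
      (\<eta> powr (2 - 2 * s) - \<epsilon> powr (2 - 2 * s)) / (\<epsilon> powr (1 - 2 * s) - \<eta> powr (1 - 2 * s)))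
     (kappa s \<phi> x \<eta> p \<epsilon>)"

end

theory Submission
  imports Defs
begin

text \<open>Write \<open>e = p\<^sub>x/\<bar>p\<^sub>x\<bar>\<close> and, for a unit vector \<open>y\<close>, \<open>d = \<bar>y - e\<bar>\<close>. Along the ray \<open>t y\<close>
  compared with \<open>t e\<close>, Taylor's formula on \<open>B\<^sub>\<eta>(x)\<close> bounds the difference of \<open>\<phi>\<close> by
  \<open>-\<bar>p\<^sub>x\<bar> d\<^sup>2 t/2 + 2 C\<^sub>x d t\<^sup>2\<close> for \<open>t < \<eta>\<close>, while for \<open>t > \<eta>\<close> the two points are joined along a
  great circle outside the ball by at most \<open>2t + 1\<close> steps of length \<open>d\<close>, giving \<open>2 \<omega>(d) (1 + t)\<close>.
  Integrated against \<open>\<mu>\<^sub>s\<close>, this is at most the claimed error: by monotonicity if \<open>d \<le> A\<^sub>\<epsilon>\<close>, and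
  because the negative first-order term dominates if \<open>d > A\<^sub>\<epsilon>\<close>. So \<open>(e, e)\<close> is an approximate saddle
  point of the sup-inf defining \<open>L\<^sub>s\<^sup>\<epsilon>[\<phi>](x)\<close>. In dimension one the sphere is \<open>{e, -e}\<close>, no great
  circle exists, and the sup-inf equals the value at \<open>(e, e)\<close> by symmetry.\<close>

section \<open>Great circles on the unit sphere\<close>

lemma half_le_sin:
  fixes y :: real
  assumes "0 \<le> y" "y \<le> pi / 2"
  shows "y / 2 \<le> sin y"
proof (cases "y \<le> pi / 3")
  case True
  have "(\<lambda>y. sin y - y / 2) 0 \<le> (\<lambda>y. sin y - y / 2) y"
  proof (rule DERIV_nonneg_imp_nondecreasing[OF assms(1)])
    fix z assume "0 \<le> z" "z \<le> y"
    then have "cos (pi / 3) \<le> cos z"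
      using True by (intro cos_monotone_0_pi_le) auto
    then show "\<exists>d. ((\<lambda>y. sin y - y / 2) has_real_derivative d) (at z) \<and> 0 \<le> d"
      by (intro exI[of _ "cos z - 1 / 2"]) (auto intro!: derivative_eq_intros simp: cos_60)
  qed
  then show ?thesis by simp
next
  case False
  then have "sin (pi / 3) \<le> sin y"
    using assms by (intro sin_monotone_2pi_le) auto
  moreover have "y / 2 \<le> sqrt 3 / 2"
  proof -
    have "pi \<le> 3.1415926535899" by (rule pi_approx(2))
    moreover have "(1.7::real) \<le> sqrt 3" by (rule real_le_rsqrt) (simp add: power2_eq_square)
    ultimately show ?thesis using assms by simp
  qed
  ultimately show ?thesis by (simp add: sin_60)
qed

lemma norm_cos_sin_orthonormal:
  fixes u v :: "'a::real_inner"
  assumes "norm u = 1" "norm v = 1" "u \<bullet> v = 0"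
  shows "norm (cos a *\<^sub>R u + sin a *\<^sub>R v) = 1"
proof -
  have "u \<bullet> u = 1" "v \<bullet> v = 1" "v \<bullet> u = 0"
    using assms by (simp_all add: inner_commute flip: power2_norm_eq_inner)
  then have "norm (cos a *\<^sub>R u + sin a *\<^sub>R v) ^ 2 = 1"
    unfolding power2_norm_eq_inner
    by (simp add: inner_add_left inner_add_right assms(3) algebra_simps flip: power2_eq_square)
  then show ?thesis
    using norm_ge_zero[of "cos a *\<^sub>R u + sin a *\<^sub>R v"] by (auto simp: power2_eq_1_iff)
qed

lemma dist_cos_sin_orthonormal:
  fixes u v :: "'a::real_inner"
  assumes "norm u = 1" "norm v = 1" "u \<bullet> v = 0"
  shows "dist (cos a *\<^sub>R u + sin a *\<^sub>R v) (cos b *\<^sub>R u + sin b *\<^sub>R v) = 2 * \<bar>sin ((a - b) / 2)\<bar>"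
proof -
  have uv: "u \<bullet> u = 1" "v \<bullet> v = 1" "v \<bullet> u = 0"
    using assms by (simp_all add: inner_commute flip: power2_norm_eq_inner)
  let ?z = "(cos a - cos b) *\<^sub>R u + (sin a - sin b) *\<^sub>R v"
  have dist_eq: "dist (cos a *\<^sub>R u + sin a *\<^sub>R v) (cos b *\<^sub>R u + sin b *\<^sub>R v) = norm ?z"
    by (simp add: dist_norm algebra_simps)
  have "norm ?z ^ 2 = (cos a - cos b)\<^sup>2 + (sin a - sin b)\<^sup>2"
    unfolding power2_norm_eq_inner
    by (simp add: inner_add_left inner_add_right uv assms(3) power2_eq_square algebra_simps)
  also have "\<dots> = 2 - 2 * cos (a - b)"
    by (simp add: cos_diff power2_diff algebra_simps)
  also have "cos (a - b) = cos (2 * ((a - b) / 2))"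
    by (simp only: mult_2 field_sum_of_halves)
  also have "\<dots> = 1 - 2 * (sin ((a - b) / 2))\<^sup>2"
    by (rule cos_double_sin)
  also have "2 - 2 * (1 - 2 * (sin ((a - b) / 2))\<^sup>2) = (2 * \<bar>sin ((a - b) / 2)\<bar>)\<^sup>2"
    by (simp add: power_mult_distrib)
  finally have "norm ?z = 2 * \<bar>sin ((a - b) / 2)\<bar>"
    by (rule power2_eq_imp_eq) auto
  then show ?thesis by (simp add: dist_eq)
qed

lemma unit_vector_on_great_circle:
  fixes u u' :: "'a::euclidean_space"
  assumes "2 \<le> DIM('a)" "norm u = 1" "norm u' = 1"
  obtains v \<theta> where "norm v = 1" "u \<bullet> v = 0" "0 \<le> \<theta>" "\<theta> \<le> pi"
    "u' = cos \<theta> *\<^sub>R u + sin \<theta> *\<^sub>R v"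
proof -
  define c where "c = u \<bullet> u'"
  have uu: "u \<bullet> u = 1" and uu': "u' \<bullet> u' = 1"
    using assms by (simp_all flip: power2_norm_eq_inner)
  have c: "-1 \<le> c" "c \<le> 1"
    using Cauchy_Schwarz_ineq2[of u u'] assms by (auto simp: c_def abs_le_iff)
  define r where "r = u' - c *\<^sub>R u"
  have ur: "u \<bullet> r = 0" by (simp add: r_def inner_diff_right uu c_def)
  have "norm r ^ 2 = 1 - c\<^sup>2"
    unfolding power2_norm_eq_inner
    by (simp add: r_def inner_diff_left inner_diff_right uu uu' c_def inner_commute power2_eq_square)
  then have nr: "norm r = sqrt (1 - c\<^sup>2)" by (simp add: real_sqrt_unique)
  obtain v0 where v0: "v0 \<noteq> 0" "orthogonal u v0"
    using orthogonal_to_vector_exists[OF assms(1)] by blast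
  define v where "v = (if r = 0 then v0 /\<^sub>R norm v0 else r /\<^sub>R norm r)"
  have "norm v = 1" "u \<bullet> v = 0"
    using v0 ur by (auto simp: v_def orthogonal_def)
  moreover have "u' = cos (arccos c) *\<^sub>R u + sin (arccos c) *\<^sub>R v"
    using c by (simp add: v_def sin_arccos nr[symmetric] r_def)
  moreover have "0 \<le> arccos c" "arccos c \<le> pi"
    using c by (simp_all add: arccos_lbound arccos_ubound)
  ultimately show ?thesis using that by blast
qed

text \<open>Walking along the great circle, \<open>\<lceil>2t\<rceil>\<close> steps of angle \<open>\<theta>/\<lceil>2t\<rceil>\<close> suffice to go from \<open>t u\<close>
  to \<open>t u'\<close> with steps no longer than \<open>\<bar>u - u'\<bar> = 2 sin (\<theta>/2) \<ge> \<theta>/2\<close>.\<close>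
lemma sphere_chain:
  fixes u u' :: "'a::euclidean_space"
  assumes "2 \<le> DIM('a)" "norm u = 1" "norm u' = 1" "0 < t"
  obtains P :: "nat \<Rightarrow> 'a" and n where "real n \<le> 2 * t + 1"
    "P 0 = t *\<^sub>R u" "P n = t *\<^sub>R u'" "\<And>k. norm (P k) = t"
    "\<And>k. dist (P k) (P (Suc k)) \<le> norm (u - u')"
proof -
  obtain v \<theta> where v: "norm v = 1" "u \<bullet> v = 0" and \<theta>: "0 \<le> \<theta>" "\<theta> \<le> pi"
    and u': "u' = cos \<theta> *\<^sub>R u + sin \<theta> *\<^sub>R v"
    using unit_vector_on_great_circle[OF assms(1-3)] by blast
  define w where "w a = cos a *\<^sub>R u + sin a *\<^sub>R v" for a
  have dist_w: "dist (w a) (w b) = 2 * \<bar>sin ((a - b) / 2)\<bar>" for a b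
    unfolding w_def by (rule dist_cos_sin_orthonormal[OF assms(2) v])
  have "norm (u - u') = 2 * \<bar>sin ((0 - \<theta>) / 2)\<bar>"
    using dist_w[of 0 \<theta>] by (simp add: w_def u' dist_norm)
  also have "\<dots> = 2 * sin (\<theta> / 2)"
    using \<theta> by (simp add: sin_ge_zero)
  finally have half_\<theta>: "\<theta> / 2 \<le> norm (u - u')"
    using half_le_sin[of "\<theta> / 2"] \<theta> by simp
  define n where "n = nat \<lceil>2 * t\<rceil>"
  have n: "2 * t \<le> real n" "real n \<le> 2 * t + 1" "0 < n"
    using assms(4) by (auto simp: n_def)
  define P where "P k = t *\<^sub>R w (real k * \<theta> / real n)" for k
  have "dist (P k) (P (Suc k)) \<le> norm (u - u')" for k
  proof -
    have "\<theta> / (2 * real n) \<le> \<theta> / 1"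
      using \<theta> n(3) by (intro divide_left_mono) auto
    then have "\<bar>sin (\<theta> / (real n * 2))\<bar> = sin (\<theta> / (2 * real n))"
      using \<theta> by (simp add: sin_ge_zero mult.commute)
    moreover have "(real k * \<theta> / real n - real (Suc k) * \<theta> / real n) / 2 = - (\<theta> / (2 * real n))"
      using n(3) by (simp add: field_simps)
    ultimately have "dist (P k) (P (Suc k)) = t * (2 * sin (\<theta> / (2 * real n)))"
      using assms(4) dist_w[of "real k * \<theta> / real n" "real (Suc k) * \<theta> / real n"]
      by (simp add: P_def dist_norm flip: scaleR_diff_right)
    also have "\<dots> \<le> t * (\<theta> / real n)"
      using assms(4) \<theta> sin_x_le_x[of "\<theta> / (2 * real n)"] n(3)
      by (intro mult_left_mono) (auto simp: field_simps)
    also have "\<dots> \<le> \<theta> / 2"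
      using mult_left_mono[OF n(1) \<theta>(1)] n(3) by (simp add: field_simps mult.commute)
    finally show ?thesis using half_\<theta> by simp
  qed
  moreover have "norm (P k) = t" for k
    using assms(4) norm_cos_sin_orthonormal[OF assms(2) v] by (simp add: P_def w_def)
  ultimately show ?thesis
    using that[of n P] n(2,3) by (simp add: P_def w_def u')
qed

lemma sphere_eq_pair_if_DIM_1:
  fixes e :: "'a::euclidean_space"
  assumes "DIM('a) = 1" "norm e = 1"
  shows "sphere 0 1 = {e, - e}"
proof -
  obtain b :: 'a where b: "Basis = {b}"
    using assms(1) card_1_singletonE by blast
  then have "norm b = 1" by (metis insertI1 norm_Basis)
  moreover have rep: "z = (z \<bullet> b) *\<^sub>R b" for z :: 'a
    using euclidean_representation[of z] unfolding b by simp
  ultimately have norm_eq: "norm z = \<bar>z \<bullet> b\<bar>" for z :: 'a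
    by (metis norm_scaleR mult_1_right)
  have unit: "z = e \<or> z = - e" if "norm z = 1" for z
  proof -
    have "z \<bullet> b = e \<bullet> b \<or> z \<bullet> b = - (e \<bullet> b)"
      using that assms(2) norm_eq[of z] norm_eq[of e] by linarith
    then show ?thesis
      using rep[of z] rep[of e] by (metis scaleR_minus_left)
  qed
  then show ?thesis using assms(2) by (auto dest: unit)
qed

section \<open>The modulus of continuity outside the ball\<close>

lemma omega_bdd_above:
  fixes \<phi> :: "'a::euclidean_space \<Rightarrow> real"
  assumes "bounded (\<phi> ` (- cball x \<eta>))"
  shows "bdd_above ((\<lambda>zw. \<bar>\<phi> (fst zw) - \<phi> (snd zw)\<bar>) `
           {(z, w). z \<in> - cball x \<eta> \<and> w \<in> - cball x \<eta> \<and> dist z w \<le> a})"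
proof -
  obtain M where M: "\<And>z. z \<in> - cball x \<eta> \<Longrightarrow> \<bar>\<phi> z\<bar> \<le> M"
    using assms unfolding bounded_iff by (metis image_eqI real_norm_def)
  show ?thesis
  proof (rule bdd_aboveI2[where M = "2 * M"])
    fix zw assume "zw \<in> {(z, w). z \<in> - cball x \<eta> \<and> w \<in> - cball x \<eta> \<and> dist z w \<le> a}"
    then have "\<bar>\<phi> (fst zw)\<bar> \<le> M" "\<bar>\<phi> (snd zw)\<bar> \<le> M" using M by auto
    then show "\<bar>\<phi> (fst zw) - \<phi> (snd zw)\<bar> \<le> 2 * M" by linarith
  qed
qed

lemma abs_diff_le_omega:
  fixes \<phi> :: "'a::euclidean_space \<Rightarrow> real"
  assumes "bounded (\<phi> ` (- cball x \<eta>))" "z \<notin> cball x \<eta>" "w \<notin> cball x \<eta>" "dist z w \<le> a"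
  shows "\<bar>\<phi> z - \<phi> w\<bar> \<le> omega \<phi> x \<eta> a"
proof -
  have "\<bar>\<phi> (fst (z, w)) - \<phi> (snd (z, w))\<bar> \<le> omega \<phi> x \<eta> a"
    unfolding omega_def by (rule cSUP_upper[OF _ omega_bdd_above[OF assms(1)]]) (use assms in auto)
  then show ?thesis by simp
qed

lemma ex_not_in_cball:
  fixes x :: "'a::euclidean_space"
  obtains z where "z \<notin> cball x \<eta>"
  using bounded_cball[of x \<eta>] not_bounded_UNIV by (metis UNIV_eq_I)

lemma omega_nonneg:
  fixes \<phi> :: "'a::euclidean_space \<Rightarrow> real"
  assumes "bounded (\<phi> ` (- cball x \<eta>))" "0 \<le> a"
  shows "0 \<le> omega \<phi> x \<eta> a"
proof -
  obtain z :: 'a where "z \<notin> cball x \<eta>" by (rule ex_not_in_cball)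
  then have "\<bar>\<phi> z - \<phi> z\<bar> \<le> omega \<phi> x \<eta> a"
    using assms by (intro abs_diff_le_omega) auto
  then show ?thesis by simp
qed

lemma omega_mono:
  fixes \<phi> :: "'a::euclidean_space \<Rightarrow> real"
  assumes "bounded (\<phi> ` (- cball x \<eta>))" "0 \<le> a" "a \<le> b"
  shows "omega \<phi> x \<eta> a \<le> omega \<phi> x \<eta> b"
  unfolding omega_def
proof (rule cSUP_subset_mono)
  obtain z :: 'a where "z \<notin> cball x \<eta>" by (rule ex_not_in_cball)
  then show "{(z, w). z \<in> - cball x \<eta> \<and> w \<in> - cball x \<eta> \<and> dist z w \<le> a} \<noteq> {}"
    using assms(2) by (metis (mono_tags, lifting) ComplI case_prodI dist_self mem_Collect_eq empty_iff)
qed (use omega_bdd_above[OF assms(1)] assms(3) in auto)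

lemma abs_diff_le_omega_chain:
  fixes \<phi> :: "'a::euclidean_space \<Rightarrow> real"
  assumes "bounded (\<phi> ` (- cball x \<eta>))" "\<And>k. P k \<notin> cball x \<eta>" "\<And>k. dist (P k) (P (Suc k)) \<le> a"
  shows "\<bar>\<phi> (P 0) - \<phi> (P n)\<bar> \<le> real n * omega \<phi> x \<eta> a"
proof (induction n)
  case (Suc n)
  have "\<bar>\<phi> (P n) - \<phi> (P (Suc n))\<bar> \<le> omega \<phi> x \<eta> a"
    using assms by (intro abs_diff_le_omega)
  with Suc.IH show ?case by (simp add: algebra_simps)
qed simp

lemma abs_diff_on_sphere_le_omega:
  fixes \<phi> :: "'a::euclidean_space \<Rightarrow> real"
  assumes "2 \<le> DIM('a)" "bounded (\<phi> ` (- cball x \<eta>))" "0 \<le> \<eta>" "\<eta> < t"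
    and "norm u = 1" "norm u' = 1"
  shows "\<bar>\<phi> (x + t *\<^sub>R u) - \<phi> (x + t *\<^sub>R u')\<bar> \<le> 2 * (1 + t) * omega \<phi> x \<eta> (norm (u - u'))"
proof -
  obtain P :: "nat \<Rightarrow> 'a" and n where n: "real n \<le> 2 * t + 1"
    and P: "P 0 = t *\<^sub>R u" "P n = t *\<^sub>R u'" "\<And>k. norm (P k) = t"
    "\<And>k. dist (P k) (P (Suc k)) \<le> norm (u - u')"
    using sphere_chain[OF assms(1,5,6)] assms(3,4) by (metis le_less_trans)
  have "\<bar>\<phi> (x + P 0) - \<phi> (x + P n)\<bar> \<le> real n * omega \<phi> x \<eta> (norm (u - u'))"
    by (rule abs_diff_le_omega_chain[OF assms(2)]) (use P(3,4) assms(4) in \<open>auto simp: dist_norm\<close>)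
  also have "\<dots> \<le> 2 * (1 + t) * omega \<phi> x \<eta> (norm (u - u'))"
    using n omega_nonneg[OF assms(2) norm_ge_zero] by (intro mult_right_mono) auto
  finally show ?thesis by (simp add: P)
qed

section \<open>Pointwise estimates near and far from the base point\<close>

lemma norm_le_SUP_ball:
  fixes f :: "'a::euclidean_space \<Rightarrow> 'b::real_normed_vector"
  assumes "continuous_on (cball x \<eta>) f" "0 < \<eta>" "z \<in> cball x \<eta>"
  shows "norm (f z) \<le> (SUP z\<in>ball x \<eta>. norm (f z))"
proof -
  have cont: "continuous_on (cball x \<eta>) (\<lambda>z. norm (f z))"
    using assms(1) by (intro continuous_intros)
  then have "bounded ((\<lambda>z. norm (f z)) ` cball x \<eta>)"
    by (intro compact_imp_bounded compact_continuous_image compact_cball)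
  then have "bdd_above ((\<lambda>z. norm (f z)) ` ball x \<eta>)"
    by (meson bounded_imp_bdd_above bdd_above_mono ball_subset_cball image_mono)
  then have "(\<lambda>z. norm (f z)) ` closure (ball x \<eta>) \<subseteq> {..(SUP z\<in>ball x \<eta>. norm (f z))}"
    using cont assms(2) by (intro image_closure_subset) (auto intro: cSUP_upper)
  then show ?thesis using assms(2,3) by (auto simp: image_subset_iff)
qed

lemma second_order_difference_bound:
  fixes \<phi> :: "'a::euclidean_space \<Rightarrow> real" and D :: "'a \<Rightarrow> 'a" and H :: "'a \<Rightarrow> ('a \<Rightarrow>\<^sub>L 'a)"
  assumes grad: "\<And>z. z \<in> cball x \<eta> \<Longrightarrow> (\<phi> has_derivative (\<lambda>h. D z \<bullet> h)) (at z within cball x \<eta>)"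
    and hess: "\<And>z. z \<in> cball x \<eta> \<Longrightarrow> (D has_derivative blinfun_apply (H z)) (at z within cball x \<eta>)"
    and H_le: "\<And>z. z \<in> cball x \<eta> \<Longrightarrow> norm (H z) \<le> B"
    and t: "t \<le> \<eta>" and v: "norm v \<le> t" "norm v' \<le> t"
  shows "\<bar>\<phi> (x + v) - \<phi> (x + v') - D x \<bullet> (v - v')\<bar> \<le> norm (v - v') * (B * t)"
proof -
  have x: "x \<in> cball x t" "x \<in> cball x \<eta>"
    using t order_trans[OF norm_ge_zero v(1)] by auto
  have sub: "cball x t \<subseteq> cball x \<eta>" using t by auto
  have D_lip: "norm (D z - D x) \<le> B * t" if z: "z \<in> cball x t" for z
  proof -
    have "norm (D z - D x) \<le> B * norm (z - x)"
      by (rule differentiable_bound[OF convex_cball hess])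
        (use z sub x H_le in \<open>auto simp flip: norm_blinfun.rep_eq\<close>)
    also have "\<dots> \<le> B * t"
      using z order_trans[OF norm_ge_zero H_le[OF x(2)]]
      by (intro mult_left_mono) (auto simp: dist_norm norm_minus_commute)
    finally show ?thesis .
  qed
  have "onorm ((\<lambda>h. D z \<bullet> h) - (\<lambda>h. D x \<bullet> h)) \<le> B * t" if "z \<in> cball x t" for z
  proof -
    have "onorm ((\<lambda>h. D z \<bullet> h) - (\<lambda>h. D x \<bullet> h)) \<le> norm (D z - D x) * onorm (\<lambda>h::'a. h)"
      using onorm_inner_right[OF bounded_linear_ident, of "D z - D x"]
      by (simp add: fun_diff_def inner_diff_left)
    also have "\<dots> \<le> norm (D z - D x)"
      by (rule mult_left_le[OF onorm_id_le norm_ge_zero])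
    finally show ?thesis using D_lip[OF that] by linarith
  qed
  moreover have "x + v' + \<tau> *\<^sub>R (x + v - (x + v')) \<in> cball x t" if "\<tau> \<in> {0..1}" for \<tau>
  proof -
    have "(1 - \<tau>) *\<^sub>R (x + v') + \<tau> *\<^sub>R (x + v) \<in> cball x t"
      using that v by (intro convexD_alt[OF convex_cball]) (auto simp: dist_norm)
    then show ?thesis by (simp add: algebra_simps)
  qed
  ultimately have "norm (\<phi> (x + v) - \<phi> (x + v') - D x \<bullet> (x + v - (x + v'))) \<le> norm (x + v - (x + v')) * (B * t)"
    using has_derivative_subset[OF grad sub] sub x(1)
    by (intro differentiable_bound_linearization[where S = "cball x t" and f' = "\<lambda>z h. D z \<bullet> h"]) auto
  then show ?thesis by simp
qed

lemma directional_difference_near: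
  fixes \<phi> :: "'a::euclidean_space \<Rightarrow> real" and D :: "'a \<Rightarrow> 'a" and H :: "'a \<Rightarrow> ('a \<Rightarrow>\<^sub>L 'a)"
  assumes grad: "\<And>z. z \<in> cball x \<eta> \<Longrightarrow> (\<phi> has_derivative (\<lambda>h. D z \<bullet> h)) (at z within cball x \<eta>)"
    and hess: "\<And>z. z \<in> cball x \<eta> \<Longrightarrow> (D has_derivative blinfun_apply (H z)) (at z within cball x \<eta>)"
    and H_le: "\<And>z. z \<in> cball x \<eta> \<Longrightarrow> norm (H z) \<le> B"
    and "D x \<noteq> 0" "\<bar>\<sigma>\<bar> = 1" "norm y = 1" "0 \<le> t" "t \<le> \<eta>"
  shows "\<sigma> * (\<phi> (x + (\<sigma> * t) *\<^sub>R y) - \<phi> (x + (\<sigma> * t) *\<^sub>R (D x /\<^sub>R norm (D x))))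
     \<le> - (norm (D x) * (norm (y - D x /\<^sub>R norm (D x)))\<^sup>2 / 2) * t
        + B * norm (y - D x /\<^sub>R norm (D x)) * t\<^sup>2"
proof -
  define p where "p = norm (D x)"
  define e where "e = D x /\<^sub>R p"
  define d where "d = norm (y - e)"
  have p: "0 < p" using assms(4) by (simp add: p_def)
  have ne: "norm e = 1" using p by (simp add: e_def p_def)
  have ee: "e \<bullet> e = 1" and "y \<bullet> y = 1"
    using ne assms(6) by (simp_all flip: power2_norm_eq_inner)
  then have "d\<^sup>2 = 2 - 2 * (e \<bullet> y)"
    by (simp only: d_def power2_norm_eq_inner) (simp add: inner_diff_left inner_diff_right inner_commute)
  then have ey: "e \<bullet> y = 1 - d\<^sup>2 / 2" by (simp add: field_simps)
  have "D x = p *\<^sub>R e" using p by (simp add: e_def)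
  then have gradient_term: "D x \<bullet> (y - e) = - p * d\<^sup>2 / 2"
    by (simp add: inner_diff_right ee ey right_diff_distrib)
  have \<sigma>\<sigma>: "\<sigma> * \<sigma> = 1" using assms(5) by (metis abs_mult_self_eq mult_1)
  define v where "v = (\<sigma> * t) *\<^sub>R y"
  define v' where "v' = (\<sigma> * t) *\<^sub>R e"
  have vv': "v - v' = (\<sigma> * t) *\<^sub>R (y - e)" by (simp add: v_def v'_def algebra_simps)
  have norm_vv': "norm (v - v') = t * d"
    using assms(5,7) by (simp add: vv' d_def abs_mult)
  define err where "err = \<phi> (x + v) - \<phi> (x + v') - D x \<bullet> (v - v')"
  have "\<bar>err\<bar> \<le> norm (v - v') * (B * t)"
    unfolding err_def using assms(5-8) ne
    by (intro second_order_difference_bound[OF grad hess H_le]) (auto simp: v_def v'_def abs_mult)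
  then have "\<sigma> * err \<le> t * d * (B * t)"
    using assms(5) norm_vv' by (metis abs_ge_self abs_mult mult_1 order_trans)
  moreover have "\<sigma> * (D x \<bullet> (v - v')) = (\<sigma> * \<sigma>) * t * (D x \<bullet> (y - e))"
    by (simp add: vv')
  then have "\<sigma> * (D x \<bullet> (v - v')) = t * (- p * d\<^sup>2 / 2)"
    using \<sigma>\<sigma> gradient_term by simp
  ultimately have "\<sigma> * (\<phi> (x + v) - \<phi> (x + v')) \<le> t * (- p * d\<^sup>2 / 2) + t * d * (B * t)"
    by (simp add: err_def algebra_simps)
  then show ?thesis
    by (simp add: v_def v'_def e_def p_def d_def power2_eq_square algebra_simps)
qed

lemma directional_difference_far:
  fixes \<phi> :: "'a::euclidean_space \<Rightarrow> real"
  assumes "2 \<le> DIM('a)" "bounded (\<phi> ` (- cball x \<eta>))" "0 \<le> \<eta>" "\<eta> < t"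
    and "\<bar>\<sigma>\<bar> = 1" "norm y = 1" "norm e = 1"
  shows "\<sigma> * (\<phi> (x + (\<sigma> * t) *\<^sub>R y) - \<phi> (x + (\<sigma> * t) *\<^sub>R e)) \<le> 2 * omega \<phi> x \<eta> (norm (y - e)) * (1 + t)"
proof -
  have scale: "(\<sigma> * t) *\<^sub>R y = t *\<^sub>R (\<sigma> *\<^sub>R y)" "(\<sigma> * t) *\<^sub>R e = t *\<^sub>R (\<sigma> *\<^sub>R e)"
    by (simp_all add: mult.commute)
  have "norm (\<sigma> *\<^sub>R y - \<sigma> *\<^sub>R e) = norm (y - e)"
    using assms(5) by (simp flip: scaleR_diff_right)
  moreover have "\<sigma> * (\<phi> (x + (\<sigma> * t) *\<^sub>R y) - \<phi> (x + (\<sigma> * t) *\<^sub>R e))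
      \<le> \<bar>\<phi> (x + t *\<^sub>R (\<sigma> *\<^sub>R y)) - \<phi> (x + t *\<^sub>R (\<sigma> *\<^sub>R e))\<bar>"
    unfolding scale using assms(5) by (metis abs_ge_self abs_mult mult_1)
  moreover have "\<dots> \<le> 2 * (1 + t) * omega \<phi> x \<eta> (norm (\<sigma> *\<^sub>R y - \<sigma> *\<^sub>R e))"
    using assms by (intro abs_diff_on_sphere_le_omega) auto
  ultimately show ?thesis by (simp add: algebra_simps)
qed

section \<open>Integrals against the measure \<open>\<mu>\<^sub>s\<close>\<close>

lemma Cs_pos: "0 < s \<Longrightarrow> s < 1 \<Longrightarrow> 0 < Cs s"
  by (simp add: Cs_def Gamma_real_pos)

lemma has_real_derivative_powr_div:
  fixes t :: real
  assumes "0 < t" "r \<noteq> 0" "q = r - 1"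
  shows "((\<lambda>t. t powr r / r) has_real_derivative t powr q) (at t)"
  using DERIV_cdivide[OF has_real_derivative_powr[OF assms(1)], of r r] assms(2,3) by simp

lemma muS_kernel_integral_near:
  fixes a b :: real
  assumes "0 < \<epsilon>" "\<epsilon> < \<eta>" "1/2 < s" "s < 1"
  shows "set_integrable lborel {\<epsilon><..<\<eta>} (\<lambda>t. Cs s * t powr (-1 - 2 * s) * (a * t + b * t\<^sup>2))"
    and "(LINT t:{\<epsilon><..<\<eta>}|lborel. Cs s * t powr (-1 - 2 * s) * (a * t + b * t\<^sup>2))
         = Cs s * (a * (\<epsilon> powr (1 - 2 * s) - \<eta> powr (1 - 2 * s)) / (2 * s - 1)
                  + b * (\<eta> powr (2 - 2 * s) - \<epsilon> powr (2 - 2 * s)) / (2 - 2 * s))"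
proof -
  let ?f = "\<lambda>t. Cs s * t powr (-1 - 2 * s) * (a * t + b * t\<^sup>2)"
  let ?F = "\<lambda>t. Cs s * (a * (t powr (1 - 2 * s) / (1 - 2 * s)) + b * (t powr (2 - 2 * s) / (2 - 2 * s)))"
  have cont: "continuous_on {\<epsilon>..\<eta>} ?f"
    using assms by (intro continuous_intros) auto
  then have "interval_lebesgue_integrable lborel \<epsilon> \<eta> ?f"
    using assms by (intro interval_integrable_continuous_on) auto
  then show "set_integrable lborel {\<epsilon><..<\<eta>} ?f"
    using assms by (simp add: interval_lebesgue_integrable_def)
  have "(LBINT t=\<epsilon>..\<eta>. ?f t) = ?F \<eta> - ?F \<epsilon>"
  proof (rule interval_integral_FTC_finite)
    show "continuous_on {min \<epsilon> \<eta>..max \<epsilon> \<eta>} ?f" using cont assms by simp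
    fix t assume "min \<epsilon> \<eta> \<le> t" "t \<le> max \<epsilon> \<eta>"
    then have t: "0 < t" using assms by simp
    have "((\<lambda>t. t powr (1 - 2 * s) / (1 - 2 * s)) has_real_derivative t powr (-2 * s)) (at t)"
      "((\<lambda>t. t powr (2 - 2 * s) / (2 - 2 * s)) has_real_derivative t powr (1 - 2 * s)) (at t)"
      using assms(3,4) by (intro has_real_derivative_powr_div[OF t]; simp)+
    then have deriv: "(?F has_real_derivative Cs s * (a * t powr (-2 * s) + b * t powr (1 - 2 * s))) (at t)"
      by (intro DERIV_cmult DERIV_add)
    have pw: "t powr (-1 - 2 * s) * t = t powr (-2 * s)" "t powr (-2 * s) * t = t powr (1 - 2 * s)"
      using powr_mult_base[OF less_imp_le[OF t], of "-1 - 2 * s"] powr_mult_base[OF less_imp_le[OF t], of "-2 * s"]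
      by (simp_all add: mult.commute)
    have "t powr (-1 - 2 * s) * (a * t + b * t\<^sup>2)
        = a * (t powr (-1 - 2 * s) * t) + b * ((t powr (-1 - 2 * s) * t) * t)"
      by (simp add: power2_eq_square algebra_simps)
    then have "t powr (-1 - 2 * s) * (a * t + b * t\<^sup>2) = a * t powr (-2 * s) + b * t powr (1 - 2 * s)"
      by (simp only: pw)
    with deriv show "(?F has_vector_derivative ?f t) (at t within {min \<epsilon> \<eta>..max \<epsilon> \<eta>})"
      by (simp add: has_real_derivative_iff_has_vector_derivative[symmetric] has_field_derivative_at_within mult.assoc)
  qed
  moreover have "(LBINT t=\<epsilon>..\<eta>. ?f t) = (LINT t:{\<epsilon><..<\<eta>}|lborel. ?f t)"
    using assms by (simp add: interval_lebesgue_integral_def)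
  moreover have "?F \<eta> - ?F \<epsilon> = Cs s * (a * ((\<eta> powr (1 - 2 * s) - \<epsilon> powr (1 - 2 * s)) / (1 - 2 * s))
      + b * ((\<eta> powr (2 - 2 * s) - \<epsilon> powr (2 - 2 * s)) / (2 - 2 * s)))"
    by (simp add: diff_divide_distrib algebra_simps)
  moreover have "(\<eta> powr (1 - 2 * s) - \<epsilon> powr (1 - 2 * s)) / (1 - 2 * s)
      = (\<epsilon> powr (1 - 2 * s) - \<eta> powr (1 - 2 * s)) / (2 * s - 1)"
    by (metis minus_diff_eq minus_divide_divide)
  ultimately show "(LINT t:{\<epsilon><..<\<eta>}|lborel. ?f t)
         = Cs s * (a * (\<epsilon> powr (1 - 2 * s) - \<eta> powr (1 - 2 * s)) / (2 * s - 1)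
                  + b * (\<eta> powr (2 - 2 * s) - \<epsilon> powr (2 - 2 * s)) / (2 - 2 * s))"
    by simp
qed

lemma muS_kernel_integral_tail:
  assumes "0 < a" "1/2 < s" "s < 1"
  shows "set_integrable lborel {a<..} (\<lambda>t. Cs s * t powr (-1 - 2 * s) * (1 + t))"
    and "(LINT t:{a<..}|lborel. Cs s * t powr (-1 - 2 * s) * (1 + t))
          = Cs s * (a powr (-2 * s) / (2 * s) + a powr (1 - 2 * s) / (2 * s - 1))"
proof -
  let ?f = "\<lambda>t. Cs s * t powr (-1 - 2 * s) * (1 + t)"
  let ?F = "\<lambda>t. Cs s * (t powr (-2 * s) / (-2 * s) + t powr (1 - 2 * s) / (1 - 2 * s))"
  have deriv: "(?F has_real_derivative ?f t) (at t)" if "0 < t" for t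
  proof -
    have "((\<lambda>t. t powr (-2 * s) / (-2 * s)) has_real_derivative t powr (-1 - 2 * s)) (at t)"
      by (rule has_real_derivative_powr_div[OF that]) (use assms(2) in auto)
    moreover have "((\<lambda>t. t powr (1 - 2 * s) / (1 - 2 * s)) has_real_derivative t powr (-2 * s)) (at t)"
      by (rule has_real_derivative_powr_div[OF that]) (use assms(2) in auto)
    ultimately have "(?F has_real_derivative Cs s * (t powr (-1 - 2 * s) + t powr (-2 * s))) (at t)"
      by (intro DERIV_cmult DERIV_add)
    moreover have "t powr (-1 - 2 * s) * t = t powr (-2 * s)"
      using powr_mult_base[OF less_imp_le[OF that], of "-1 - 2 * s"] by (simp add: mult.commute)
    ultimately show ?thesis by (simp add: algebra_simps)
  qed
  have lim_a: "((?F \<circ> real_of_ereal) \<longlongrightarrow> ?F a) (at_right (ereal a))"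
    unfolding ereal_tendsto_simps
  proof (rule tendsto_mono[OF at_le])
    show "(?F \<longlongrightarrow> ?F a) (at a)"
      using DERIV_isCont[OF deriv[OF assms(1)]] by (simp add: isCont_def)
  qed simp
  have lim_top: "((?F \<circ> real_of_ereal) \<longlongrightarrow> 0) (at_left \<infinity>)"
  proof -
    have "((\<lambda>t::real. t powr (-2 * s)) \<longlongrightarrow> 0) at_top" "((\<lambda>t::real. t powr (1 - 2 * s)) \<longlongrightarrow> 0) at_top"
      using assms(2) by (auto intro!: tendsto_neg_powr filterlim_ident)
    then have "(?F \<longlongrightarrow> Cs s * (0 / (-2 * s) + 0 / (1 - 2 * s))) at_top"
      using assms(2) by (intro tendsto_intros) auto
    then show ?thesis unfolding ereal_tendsto_simps by simp
  qed
  have nonneg: "AE t in lborel. ereal a < ereal t \<longrightarrow> ereal t < \<infinity> \<longrightarrow> 0 \<le> ?f t"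
    using Cs_pos[of s] assms by (intro AE_I2) auto
  have cont: "isCont ?f t" if "ereal a < ereal t" "ereal t < \<infinity>" for t
    using that assms(1) by (intro continuous_intros) auto
  note FTC = interval_integral_FTC_nonneg[OF _ _ cont nonneg lim_a lim_top]
  show "set_integrable lborel {a<..} ?f"
    using FTC(1) deriv assms(1) by simp
  have "(LBINT t=a..\<infinity>. ?f t) = (LINT t:{a<..}|lborel. ?f t)"
    by (simp add: interval_lebesgue_integral_def)
  moreover have "0 - ?F a = Cs s * (a powr (-2 * s) / (2 * s) + a powr (1 - 2 * s) / (2 * s - 1))"
    using assms(2) by (simp add: field_simps)
  ultimately show "(LINT t:{a<..}|lborel. ?f t) = Cs s * (a powr (-2 * s) / (2 * s) + a powr (1 - 2 * s) / (2 * s - 1))"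
    using FTC(2) deriv assms(1) by simp
qed

lemma abs_kernel_mult_le:
  fixes g :: "real \<Rightarrow> real"
  assumes "0 < t" "0 < s" "s < 1" "\<And>t. \<bar>g t\<bar> \<le> M"
  shows "\<bar>Cs s * t powr (-1 - 2 * s) * g t\<bar> \<le> M * (Cs s * t powr (-1 - 2 * s) * (1 + t))"
proof -
  have "0 \<le> M" using assms(4)[of 0] by linarith
  then have "\<bar>g t\<bar> \<le> M * (1 + t)"
    using assms(1,4) by (smt (verit) mult_le_cancel_left1)
  then show ?thesis
    using Cs_pos[OF assms(2,3)] assms(1) by (simp add: abs_mult mult_left_mono mult_ac)
qed

lemma kernel_set_integrable_bounded:
  fixes g :: "real \<Rightarrow> real"
  assumes "0 < \<epsilon>" "1/2 < s" "s < 1"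
    and [measurable]: "g \<in> borel_measurable borel" and "\<And>t. \<bar>g t\<bar> \<le> M"
  shows "set_integrable lborel {\<epsilon><..} (\<lambda>t. Cs s * t powr (-1 - 2 * s) * g t)"
proof (rule set_integrable_bound[OF set_integrable_mult_right[OF muS_kernel_integral_tail(1)[OF assms(1-3)], of M]])
  show "set_borel_measurable lborel {\<epsilon><..} (\<lambda>t. Cs s * t powr (-1 - 2 * s) * g t)"
    unfolding set_borel_measurable_def by measurable
  show "AE t in lborel. t \<in> {\<epsilon><..} \<longrightarrow>
      norm (Cs s * t powr (-1 - 2 * s) * g t) \<le> norm (M * (Cs s * t powr (-1 - 2 * s) * (1 + t)))"
    using assms(1-3,5) abs_kernel_mult_le[of _ s g M]
    by (intro AE_I2) (auto intro: order_trans[OF _ abs_ge_self])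
qed

lemma muS_set_integrable_iff:
  fixes g :: "real \<Rightarrow> real"
  assumes "0 \<le> \<epsilon>" "0 < s" "s < 1" "g \<in> borel_measurable borel"
  shows "set_integrable (muS s) {\<epsilon><..} g \<longleftrightarrow> set_integrable lborel {\<epsilon><..} (\<lambda>t. Cs s * t powr (-1 - 2 * s) * g t)"
proof -
  have "set_integrable (muS s) {\<epsilon><..} g
      \<longleftrightarrow> integrable lborel (\<lambda>t. (indicator {0<..} t * Cs s * t powr (-1 - 2 * s)) *\<^sub>R (indicator {\<epsilon><..} t *\<^sub>R g t))"
    unfolding muS_def set_integrable_def using Cs_pos[OF assms(2,3)] assms(4)
    by (intro integrable_density) (auto intro!: AE_I2)
  also have "\<dots> \<longleftrightarrow> set_integrable lborel {\<epsilon><..} (\<lambda>t. Cs s * t powr (-1 - 2 * s) * g t)"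
    unfolding set_integrable_def using assms(1)
    by (intro arg_cong[where f = "integrable lborel"] ext) (auto split: split_indicator)
  finally show ?thesis .
qed

lemma muS_set_integral:
  fixes g :: "real \<Rightarrow> real"
  assumes "0 \<le> \<epsilon>" "0 < s" "s < 1" "g \<in> borel_measurable borel"
  shows "(LINT t:{\<epsilon><..}|muS s. g t) = (LINT t:{\<epsilon><..}|lborel. Cs s * t powr (-1 - 2 * s) * g t)"
proof -
  have "(LINT t:{\<epsilon><..}|muS s. g t)
      = integral\<^sup>L lborel (\<lambda>t. (indicator {0<..} t * Cs s * t powr (-1 - 2 * s)) *\<^sub>R (indicator {\<epsilon><..} t *\<^sub>R g t))"
    unfolding muS_def set_lebesgue_integral_def using Cs_pos[OF assms(2,3)] assms(4)
    by (intro integral_density) (auto intro!: AE_I2)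
  also have "\<dots> = (LINT t:{\<epsilon><..}|lborel. Cs s * t powr (-1 - 2 * s) * g t)"
    unfolding set_lebesgue_integral_def using assms(1)
    by (intro Bochner_Integration.integral_cong refl) (auto split: split_indicator)
  finally show ?thesis .
qed

lemma muS_set_integrable_bounded:
  fixes g :: "real \<Rightarrow> real"
  assumes "0 < \<epsilon>" "1/2 < s" "s < 1"
    and "g \<in> borel_measurable borel" and "\<And>t. \<bar>g t\<bar> \<le> M"
  shows "set_integrable (muS s) {\<epsilon><..} g"
  using muS_set_integrable_iff[of \<epsilon> s g] kernel_set_integrable_bounded[OF assms] assms(1-4) by simp

lemma muS_set_integral_abs_le:
  fixes g :: "real \<Rightarrow> real"
  assumes "0 < \<epsilon>" "1/2 < s" "s < 1"
    and "g \<in> borel_measurable borel" and "\<And>t. \<bar>g t\<bar> \<le> M"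
  shows "\<bar>LINT t:{\<epsilon><..}|muS s. g t\<bar> \<le> M * (Cs s * (\<epsilon> powr (-2 * s) / (2 * s) + \<epsilon> powr (1 - 2 * s) / (2 * s - 1)))"
proof -
  note tail = muS_kernel_integral_tail[OF assms(1-3)]
  have "\<bar>LINT t:{\<epsilon><..}|muS s. g t\<bar> = \<bar>LINT t:{\<epsilon><..}|lborel. Cs s * t powr (-1 - 2 * s) * g t\<bar>"
    using assms by (simp add: muS_set_integral)
  also have "\<dots> \<le> (LINT t:{\<epsilon><..}|lborel. \<bar>Cs s * t powr (-1 - 2 * s) * g t\<bar>)"
    using set_integral_norm_bound[OF kernel_set_integrable_bounded[OF assms]] by simp
  also have "\<dots> \<le> (LINT t:{\<epsilon><..}|lborel. M * (Cs s * t powr (-1 - 2 * s) * (1 + t)))"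
    using kernel_set_integrable_bounded[OF assms] tail(1) assms(1-3,5)
    by (intro set_integral_mono) (auto intro: abs_kernel_mult_le simp: set_integrable_abs)
  also have "\<dots> = M * (Cs s * (\<epsilon> powr (-2 * s) / (2 * s) + \<epsilon> powr (1 - 2 * s) / (2 * s - 1)))"
    using tail(2) by simp
  finally show ?thesis .
qed

lemma muS_set_integral_le_near_far:
  fixes g :: "real \<Rightarrow> real" and \<epsilon> \<eta> s :: real
  defines "K1 \<equiv> Cs s * (\<epsilon> powr (1 - 2 * s) - \<eta> powr (1 - 2 * s)) / (2 * s - 1)"
    and "K2 \<equiv> Cs s * (\<eta> powr (2 - 2 * s) - \<epsilon> powr (2 - 2 * s)) / (2 - 2 * s)"
    and "K3 \<equiv> Cs s * (\<eta> powr (-2 * s) / (2 * s) + \<eta> powr (1 - 2 * s) / (2 * s - 1))"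
  assumes eps: "0 < \<epsilon>" "\<epsilon> < \<eta>" and s: "1/2 < s" "s < 1"
    and g: "g \<in> borel_measurable borel" "\<And>t. \<bar>g t\<bar> \<le> M"
    and near: "\<And>t. \<epsilon> < t \<Longrightarrow> t < \<eta> \<Longrightarrow> g t \<le> a * t + b * t\<^sup>2"
    and far: "\<And>t. \<eta> < t \<Longrightarrow> g t \<le> c * (1 + t)"
  shows "(LINT t:{\<epsilon><..}|muS s. g t) \<le> a * K1 + b * K2 + c * K3"
proof -
  let ?k = "\<lambda>t. Cs s * t powr (-1 - 2 * s)"
  have k: "0 \<le> ?k t" for t using Cs_pos[of s] s by simp
  have int: "set_integrable lborel {\<epsilon><..} (\<lambda>t. ?k t * g t)"
    by (rule kernel_set_integrable_bounded[OF eps(1) s g])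
  have int_near: "set_integrable lborel {\<epsilon><..<\<eta>} (\<lambda>t. ?k t * g t)"
    by (rule set_integrable_subset[OF int]) auto
  have int_far: "set_integrable lborel {\<eta><..} (\<lambda>t. ?k t * g t)"
    by (rule set_integrable_subset[OF int]) (use eps in auto)
  have "(LBINT t=ereal \<epsilon>..ereal \<eta>. ?k t * g t) + (LBINT t=ereal \<eta>..\<infinity>. ?k t * g t)
      = (LBINT t=ereal \<epsilon>..\<infinity>. ?k t * g t)"
    using int eps by (intro interval_integral_sum) (simp add: interval_lebesgue_integrable_def min_def max_def)
  then have "(LINT t:{\<epsilon><..}|muS s. g t)
      = (LINT t:{\<epsilon><..<\<eta>}|lborel. ?k t * g t) + (LINT t:{\<eta><..}|lborel. ?k t * g t)"
    using eps s g(1) by (simp add: muS_set_integral interval_lebesgue_integral_def)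
  also have "(LINT t:{\<epsilon><..<\<eta>}|lborel. ?k t * g t) \<le> (LINT t:{\<epsilon><..<\<eta>}|lborel. ?k t * (a * t + b * t\<^sup>2))"
    using int_near muS_kernel_integral_near(1)[OF eps s] near k
    by (intro set_integral_mono mult_left_mono) auto
  also have "\<dots> = a * K1 + b * K2"
    unfolding muS_kernel_integral_near(2)[OF eps s] K1_def K2_def by (simp add: algebra_simps)
  also have "(LINT t:{\<eta><..}|lborel. ?k t * g t) \<le> (LINT t:{\<eta><..}|lborel. c * (?k t * (1 + t)))"
  proof (rule set_integral_mono[OF int_far])
    show "set_integrable lborel {\<eta><..} (\<lambda>t. c * (?k t * (1 + t)))"
      using muS_kernel_integral_tail(1)[of \<eta> s] eps s by simp
    fix t assume "t \<in> {\<eta><..}"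
    then have "?k t * g t \<le> ?k t * (c * (1 + t))"
      using far k by (intro mult_left_mono) auto
    then show "?k t * g t \<le> c * (?k t * (1 + t))" by (simp add: mult_ac)
  qed
  also have "\<dots> = c * K3"
    using muS_kernel_integral_tail(2)[of \<eta> s] eps s by (simp add: K3_def)
  finally show ?thesis by simp
qed

lemma muS_Lphi_integrable:
  fixes \<phi> :: "'a::euclidean_space \<Rightarrow> real"
  assumes "0 < \<epsilon>" "1/2 < s" "s < 1" "\<And>z. \<bar>\<phi> z\<bar> \<le> M" "\<phi> \<in> borel_measurable borel"
  shows "set_integrable (muS s) {\<epsilon><..} (\<lambda>t. Lphi \<phi> x (t *\<^sub>R y) (t *\<^sub>R y'))"
    and "\<bar>LINT t:{\<epsilon><..}|muS s. Lphi \<phi> x (t *\<^sub>R y) (t *\<^sub>R y')\<bar>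
           \<le> 4 * M * (Cs s * (\<epsilon> powr (-2 * s) / (2 * s) + \<epsilon> powr (1 - 2 * s) / (2 * s - 1)))"
proof -
  have bound: "\<bar>Lphi \<phi> x (t *\<^sub>R y) (t *\<^sub>R y')\<bar> \<le> 4 * M" for t
    unfolding Lphi_def using assms(4)[of "x + t *\<^sub>R y"] assms(4)[of "x - t *\<^sub>R y'"] assms(4)[of x] by linarith
  have "(\<lambda>t. Lphi \<phi> x (t *\<^sub>R y) (t *\<^sub>R y')) \<in> borel_measurable borel"
    using assms(5) unfolding Lphi_def by measurable
  note bounded = this bound
  show "set_integrable (muS s) {\<epsilon><..} (\<lambda>t. Lphi \<phi> x (t *\<^sub>R y) (t *\<^sub>R y'))"
    by (rule muS_set_integrable_bounded[OF assms(1-3) bounded])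
  show "\<bar>LINT t:{\<epsilon><..}|muS s. Lphi \<phi> x (t *\<^sub>R y) (t *\<^sub>R y')\<bar>
           \<le> 4 * M * (Cs s * (\<epsilon> powr (-2 * s) / (2 * s) + \<epsilon> powr (1 - 2 * s) / (2 * s - 1)))"
    by (rule muS_set_integral_abs_le[OF assms(1-3) bounded])
qed

section \<open>The error bound\<close>

lemma le_kappa:
  fixes \<phi> :: "'a::euclidean_space \<Rightarrow> real"
  assumes "0 \<le> d" "d \<le> 2"
    and "d\<^sup>2 \<le> 8 * omega \<phi> x \<eta> d / p *
      (((2 * s - 1) / (2 * s) * \<eta> powr (-2 * s) + \<eta> powr (1 - 2 * s)) / (\<epsilon> powr (1 - 2 * s) - \<eta> powr (1 - 2 * s)))"
  shows "d \<le> kappa s \<phi> x \<eta> p \<epsilon>"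
  unfolding kappa_def by (rule cSup_upper) (use assms in \<open>auto intro: bdd_aboveI[where M = 2]\<close>)

lemma Aeps_nonneg:
  assumes "0 < \<epsilon>" "\<epsilon> < \<eta>" "1/2 < s" "s < 1" "0 < p" "0 \<le> C"
  shows "0 \<le> Aeps s \<phi> x \<eta> p C \<epsilon>"
proof -
  have "0 \<le> \<eta> powr (2 - 2 * s) - \<epsilon> powr (2 - 2 * s)" "0 < \<epsilon> powr (1 - 2 * s) - \<eta> powr (1 - 2 * s)"
    using assms by (simp_all add: powr_mono2 powr_less_mono2_neg)
  then show ?thesis
    using assms unfolding Aeps_def by (intro max.coboundedI1) simp
qed

lemma near_far_constants_nonneg:
  fixes \<epsilon> \<eta> s :: real
  assumes "0 < \<epsilon>" "\<epsilon> < \<eta>" "1/2 < s" "s < 1"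
  shows "0 < Cs s * (\<epsilon> powr (1 - 2 * s) - \<eta> powr (1 - 2 * s)) / (2 * s - 1)"
    and "0 \<le> Cs s * (\<eta> powr (2 - 2 * s) - \<epsilon> powr (2 - 2 * s)) / (2 - 2 * s)"
    and "0 \<le> Cs s * (\<eta> powr (-2 * s) / (2 * s) + \<eta> powr (1 - 2 * s) / (2 * s - 1))"
  using assms Cs_pos[of s] by (simp_all add: powr_mono2 powr_less_mono2_neg)

text \<open>\<open>Leps_error s \<phi> x \<eta> p C \<epsilon>\<close> is the right-hand side of the proposition, with \<open>p = \<bar>p\<^sub>x\<bar>\<close>
  and \<open>C = C\<^sub>x\<close>.\<close>
definition Leps_error :: "real \<Rightarrow> ('a::euclidean_space \<Rightarrow> real) \<Rightarrow> 'a \<Rightarrow> real \<Rightarrow> real \<Rightarrow> real \<Rightarrow> real \<Rightarrow> real" where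
  "Leps_error s \<phi> x \<eta> p C \<epsilon> =
     4 * cs s * s * C * (\<eta> powr (2 - 2 * s) - \<epsilon> powr (2 - 2 * s)) * Aeps s \<phi> x \<eta> p C \<epsilon>
     + cs s * (1 - s) * (\<eta> powr (-2 * s) + 2 * s / (2 * s - 1) * \<eta> powr (1 - 2 * s))
       * omega \<phi> x \<eta> (Aeps s \<phi> x \<eta> p C \<epsilon>)"

lemma Leps_error_eq:
  fixes \<epsilon> \<eta> s :: real
  defines "K2 \<equiv> Cs s * (\<eta> powr (2 - 2 * s) - \<epsilon> powr (2 - 2 * s)) / (2 - 2 * s)"
    and "K3 \<equiv> Cs s * (\<eta> powr (-2 * s) / (2 * s) + \<eta> powr (1 - 2 * s) / (2 * s - 1))"
  assumes "1/2 < s" "s < 1"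
  shows "Leps_error s \<phi> x \<eta> p C \<epsilon>
    = 8 * (C * Aeps s \<phi> x \<eta> p C \<epsilon> * K2) + 2 * (K3 * omega \<phi> x \<eta> (Aeps s \<phi> x \<eta> p C \<epsilon>))"
proof -
  have nz: "s \<noteq> 0" "1 - s \<noteq> 0" "2 - 2 * s \<noteq> 0" "2 * s - 1 \<noteq> 0" using assms by auto
  have "4 * cs s * s * C * X * a = 8 * (C * a * (Cs s * X / (2 - 2 * s)))" for X a
    using nz unfolding cs_def by (simp add: divide_simps)
  moreover have "cs s * (1 - s) * (E1 + 2 * s / (2 * s - 1) * E2) * w
      = 2 * (Cs s * (E1 / (2 * s) + E2 / (2 * s - 1)) * w)" for E1 E2 w
    using nz unfolding cs_def by (simp add: divide_simps)
  ultimately show ?thesis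
    unfolding Leps_error_def K2_def K3_def by simp
qed

lemma Leps_error_nonneg:
  fixes \<phi> :: "'a::euclidean_space \<Rightarrow> real"
  assumes "0 < \<epsilon>" "\<epsilon> < \<eta>" "1/2 < s" "s < 1" "0 < p" "0 \<le> C" "bounded (\<phi> ` (- cball x \<eta>))"
  shows "0 \<le> Leps_error s \<phi> x \<eta> p C \<epsilon>"
proof -
  note A = Aeps_nonneg[OF assms(1-6), of \<phi> x]
  note K = near_far_constants_nonneg[OF assms(1-4)]
  show ?thesis
    unfolding Leps_error_eq[OF assms(3,4)]
    using mult_nonneg_nonneg[OF mult_nonneg_nonneg[OF assms(6) A] K(2)]
      mult_nonneg_nonneg[OF K(3) omega_nonneg[OF assms(7) A]] by simp
qed

text \<open>Beyond \<open>A\<^sub>\<epsilon>\<close> the negative first-order term dominates: the choice of \<open>A\<^sub>\<epsilon>\<close> makes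
  it at least \<open>16\<close> times the second-order term, and that of \<open>\<kappa>\<^sub>\<epsilon>\<close> at least \<open>4\<close> times the far term.\<close>
lemma near_far_bound_nonpos_beyond_Aeps:
  fixes \<phi> :: "'a::euclidean_space \<Rightarrow> real" and \<epsilon> \<eta> s :: real
  defines "K1 \<equiv> Cs s * (\<epsilon> powr (1 - 2 * s) - \<eta> powr (1 - 2 * s)) / (2 * s - 1)"
    and "K2 \<equiv> Cs s * (\<eta> powr (2 - 2 * s) - \<epsilon> powr (2 - 2 * s)) / (2 - 2 * s)"
    and "K3 \<equiv> Cs s * (\<eta> powr (-2 * s) / (2 * s) + \<eta> powr (1 - 2 * s) / (2 * s - 1))"
  assumes eps: "0 < \<epsilon>" "\<epsilon> < \<eta>" and s: "1/2 < s" "s < 1" and p: "0 < p" and C: "0 \<le> C"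
    and ob: "bounded (\<phi> ` (- cball x \<eta>))" and d: "Aeps s \<phi> x \<eta> p C \<epsilon> < d" "d \<le> 2"
  shows "- (p * d\<^sup>2 / 2) * K1 + 2 * C * d * K2 + 2 * omega \<phi> x \<eta> d * K3 \<le> 0"
proof -
  define X where "X = \<eta> powr (2 - 2 * s) - \<epsilon> powr (2 - 2 * s)"
  define Y where "Y = \<epsilon> powr (1 - 2 * s) - \<eta> powr (1 - 2 * s)"
  define Q where "Q = (2 * s - 1) / (2 * s) * \<eta> powr (-2 * s) + \<eta> powr (1 - 2 * s)"
  have nz: "1 - s \<noteq> 0" "2 * s - 1 \<noteq> 0" using s by auto
  have Y: "0 < Y" unfolding Y_def using eps s by (simp add: powr_less_mono2_neg)
  have K: "0 < K1" "0 \<le> K2" "0 \<le> K3"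
    unfolding K1_def K2_def K3_def by (fact near_far_constants_nonneg[OF eps s])+
  have d0: "0 \<le> d" using Aeps_nonneg[OF eps s p C, of \<phi> x] d(1) by linarith
  have "p * (16 * C / p * (2 * s - 1) / (1 - s) * X / Y) * K1 = 32 * C * K2"
    using p Y nz unfolding K1_def K2_def X_def[symmetric] Y_def[symmetric] by (simp add: divide_simps)
  moreover have "p * (16 * C / p * (2 * s - 1) / (1 - s) * X / Y) * K1 \<le> p * d * K1"
    using d(1) p K unfolding Aeps_def X_def Y_def by (intro mult_right_mono mult_left_mono) auto
  ultimately have "32 * C * K2 * d \<le> p * d * K1 * d"
    using d0 by (intro mult_right_mono) auto
  then have "32 * (C * d * K2) \<le> p * d\<^sup>2 * K1"
    by (simp add: power2_eq_square mult_ac)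
  moreover have "\<not> d\<^sup>2 \<le> 8 * omega \<phi> x \<eta> d / p * (Q / Y)"
    using le_kappa[of d \<phi> x \<eta> p s \<epsilon>] d d0 unfolding Aeps_def Q_def Y_def by fastforce
  then have "8 * omega \<phi> x \<eta> d / p * (Q / Y) * (p * K1) < d\<^sup>2 * (p * K1)"
    using p K by (intro mult_strict_right_mono) auto
  moreover have "8 * omega \<phi> x \<eta> d / p * (Q / Y) * (p * K1) = 8 * (omega \<phi> x \<eta> d * K3)"
    using p Y nz unfolding K1_def K3_def Q_def Y_def[symmetric] by (simp add: divide_simps)
  moreover have "- (p * d\<^sup>2 / 2) * K1 + 2 * C * d * K2 + 2 * omega \<phi> x \<eta> d * K3
      = - (p * d\<^sup>2 * K1) / 2 + 2 * (C * d * K2) + 2 * (omega \<phi> x \<eta> d * K3)"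
    by (simp add: algebra_simps)
  moreover have "0 \<le> p * d\<^sup>2 * K1" using p K by simp
  ultimately show ?thesis by (simp add: mult_ac)
qed

lemma near_far_bound_le_Leps_error:
  fixes \<phi> :: "'a::euclidean_space \<Rightarrow> real" and \<epsilon> \<eta> s :: real
  defines "K1 \<equiv> Cs s * (\<epsilon> powr (1 - 2 * s) - \<eta> powr (1 - 2 * s)) / (2 * s - 1)"
    and "K2 \<equiv> Cs s * (\<eta> powr (2 - 2 * s) - \<epsilon> powr (2 - 2 * s)) / (2 - 2 * s)"
    and "K3 \<equiv> Cs s * (\<eta> powr (-2 * s) / (2 * s) + \<eta> powr (1 - 2 * s) / (2 * s - 1))"
  assumes eps: "0 < \<epsilon>" "\<epsilon> < \<eta>" and s: "1/2 < s" "s < 1" and p: "0 < p" and C: "0 \<le> C"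
    and ob: "bounded (\<phi> ` (- cball x \<eta>))" and d: "0 \<le> d" "d \<le> 2"
  shows "- (p * d\<^sup>2 / 2) * K1 + 2 * C * d * K2 + 2 * omega \<phi> x \<eta> d * K3 \<le> Leps_error s \<phi> x \<eta> p C \<epsilon>"
proof (cases "d \<le> Aeps s \<phi> x \<eta> p C \<epsilon>")
  case True
  have K: "0 < K1" "0 \<le> K2" "0 \<le> K3"
    unfolding K1_def K2_def K3_def by (fact near_far_constants_nonneg[OF eps s])+
  have "omega \<phi> x \<eta> d * K3 \<le> K3 * omega \<phi> x \<eta> (Aeps s \<phi> x \<eta> p C \<epsilon>)"
    using omega_mono[OF ob d(1) True] K by (simp add: mult.commute mult_left_mono)
  moreover have "C * d * K2 \<le> C * Aeps s \<phi> x \<eta> p C \<epsilon> * K2"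
    using True C K by (intro mult_right_mono mult_left_mono) auto
  moreover have "0 \<le> p * d\<^sup>2 * K1" "0 \<le> C * Aeps s \<phi> x \<eta> p C \<epsilon> * K2"
    using p K mult_nonneg_nonneg[OF mult_nonneg_nonneg[OF C Aeps_nonneg[OF eps s p C]] K(2)] by simp_all
  ultimately show ?thesis
    unfolding Leps_error_eq[OF s] K2_def[symmetric] K3_def[symmetric] by (simp add: algebra_simps)
next
  case False
  then show ?thesis
    using near_far_bound_nonpos_beyond_Aeps[OF eps s p C ob _ d(2)] Leps_error_nonneg[OF eps s p C ob]
    unfolding K1_def K2_def K3_def by linarith
qed

lemma directional_integral_le_Leps_error:
  fixes \<phi> :: "'a::euclidean_space \<Rightarrow> real" and D :: "'a \<Rightarrow> 'a" and H :: "'a \<Rightarrow> ('a \<Rightarrow>\<^sub>L 'a)"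
  assumes s: "1/2 < s" "s < 1" and eps: "0 < \<epsilon>" "\<epsilon> < \<eta>"
    and bnd: "bounded (range \<phi>)" and borel[measurable]: "\<phi> \<in> borel_measurable borel"
    and grad: "\<And>z. z \<in> cball x \<eta> \<Longrightarrow> (\<phi> has_derivative (\<lambda>h. D z \<bullet> h)) (at z within cball x \<eta>)"
    and hess: "\<And>z. z \<in> cball x \<eta> \<Longrightarrow> (D has_derivative blinfun_apply (H z)) (at z within cball x \<eta>)"
    and H_le: "\<And>z. z \<in> cball x \<eta> \<Longrightarrow> norm (H z) \<le> 2 * C"
    and ob: "bounded (\<phi> ` (- cball x \<eta>))" and px: "D x \<noteq> 0"
    and N2: "2 \<le> DIM('a)" and \<sigma>: "\<bar>\<sigma>\<bar> = 1" and y: "norm y = 1"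
  shows "(LINT t:{\<epsilon><..}|muS s. \<sigma> * (\<phi> (x + (\<sigma> * t) *\<^sub>R y) - \<phi> (x + (\<sigma> * t) *\<^sub>R (D x /\<^sub>R norm (D x)))))
           \<le> Leps_error s \<phi> x \<eta> (norm (D x)) C \<epsilon>"
proof -
  define e where "e = D x /\<^sub>R norm (D x)"
  define d where "d = norm (y - e)"
  have e: "norm e = 1" using px by (simp add: e_def)
  have d: "0 \<le> d" "d \<le> 2"
    using norm_triangle_ineq4[of y e] y e by (simp_all add: d_def)
  have C: "0 \<le> C"
    using order_trans[OF norm_ge_zero H_le[of x]] eps by simp
  obtain M where M: "\<And>z. \<bar>\<phi> z\<bar> \<le> M"
    using bnd unfolding bounded_iff by (metis rangeI real_norm_def)
  have bound: "\<bar>\<sigma> * (\<phi> (x + (\<sigma> * t) *\<^sub>R y) - \<phi> (x + (\<sigma> * t) *\<^sub>R e))\<bar> \<le> 2 * M" for t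
    using \<sigma> M[of "x + (\<sigma> * t) *\<^sub>R y"] M[of "x + (\<sigma> * t) *\<^sub>R e"] by (simp add: abs_mult)
  define K1 where "K1 = Cs s * (\<epsilon> powr (1 - 2 * s) - \<eta> powr (1 - 2 * s)) / (2 * s - 1)"
  define K2 where "K2 = Cs s * (\<eta> powr (2 - 2 * s) - \<epsilon> powr (2 - 2 * s)) / (2 - 2 * s)"
  define K3 where "K3 = Cs s * (\<eta> powr (-2 * s) / (2 * s) + \<eta> powr (1 - 2 * s) / (2 * s - 1))"
  have "(LINT t:{\<epsilon><..}|muS s. \<sigma> * (\<phi> (x + (\<sigma> * t) *\<^sub>R y) - \<phi> (x + (\<sigma> * t) *\<^sub>R e)))
      \<le> - (norm (D x) * d\<^sup>2 / 2) * K1 + 2 * C * d * K2 + 2 * omega \<phi> x \<eta> d * K3"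
    unfolding K1_def K2_def K3_def
  proof (rule muS_set_integral_le_near_far[OF eps s])
    fix t assume "\<epsilon> < t" "t < \<eta>"
    then show "\<sigma> * (\<phi> (x + (\<sigma> * t) *\<^sub>R y) - \<phi> (x + (\<sigma> * t) *\<^sub>R e)) \<le> - (norm (D x) * d\<^sup>2 / 2) * t + 2 * C * d * t\<^sup>2"
      using directional_difference_near[OF grad hess H_le px \<sigma> y, of t] eps by (simp add: e_def d_def)
  next
    fix t assume "\<eta> < t"
    then show "\<sigma> * (\<phi> (x + (\<sigma> * t) *\<^sub>R y) - \<phi> (x + (\<sigma> * t) *\<^sub>R e)) \<le> 2 * omega \<phi> x \<eta> d * (1 + t)"
      using directional_difference_far[OF N2 ob _ _ \<sigma> y e] eps by (simp add: d_def)
  qed (use bound in measurable)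
  also have "\<dots> \<le> Leps_error s \<phi> x \<eta> (norm (D x)) C \<epsilon>"
    unfolding K1_def K2_def K3_def using px by (intro near_far_bound_le_Leps_error[OF eps s _ C ob d]) simp
  finally show ?thesis by (simp add: e_def)
qed

section \<open>The sup-inf over the unit sphere\<close>

lemma SUP_INF_near_saddle:
  fixes G :: "'a \<Rightarrow> 'a \<Rightarrow> real"
  assumes "e \<in> S" and bounded: "\<And>y y'. y \<in> S \<Longrightarrow> y' \<in> S \<Longrightarrow> \<bar>G y y'\<bar> \<le> B"
    and first: "\<And>y. y \<in> S \<Longrightarrow> G y e - G e e \<le> R"
    and second: "\<And>y'. y' \<in> S \<Longrightarrow> G e e - G e y' \<le> R"
  shows "\<bar>(SUP y\<in>S. INF y'\<in>S. G y y') - G e e\<bar> \<le> R"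
proof -
  have bdd_below: "bdd_below (G y ` S)" if "y \<in> S" for y
    using bounded that by (intro bdd_belowI2[where m = "- B"]) (fastforce simp: abs_le_iff)
  have INF_le: "(INF y'\<in>S. G y y') \<le> G y e" if "y \<in> S" for y
    using cINF_lower[OF bdd_below[OF that] assms(1)] .
  have "(SUP y\<in>S. INF y'\<in>S. G y y') \<le> G e e + R"
    using assms(1) INF_le first by (intro cSUP_least) (auto, smt (verit))
  moreover have "G e e - R \<le> (INF y'\<in>S. G e y')"
    using assms(1) second by (intro cINF_greatest) (auto simp: algebra_simps)
  moreover have "bdd_above ((\<lambda>y. INF y'\<in>S. G y y') ` S)"
    using INF_le bounded assms(1) by (intro bdd_aboveI2[where M = B]) (fastforce simp: abs_le_iff)
  then have "(INF y'\<in>S. G e y') \<le> (SUP y\<in>S. INF y'\<in>S. G y y')"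
    using assms(1) by (rule cSUP_upper2) simp
  ultimately show ?thesis by linarith
qed

lemma SUP_INF_pair:
  fixes G :: "'a \<Rightarrow> 'a \<Rightarrow> real"
  assumes "G e' e' = G e e" "G e e' + G e' e = 2 * G e e"
  shows "(SUP y\<in>{e, e'}. INF y'\<in>{e, e'}. G y y') = G e e"
proof -
  have "(INF y'\<in>{e, e'}. G y y') = min (G y e) (G y e')" for y
    by (simp add: cInf_insert inf_min)
  then have "(SUP y\<in>{e, e'}. INF y'\<in>{e, e'}. G y y') = max (min (G e e) (G e e')) (min (G e' e) (G e' e'))"
    by (simp add: cSup_insert sup_max)
  then show ?thesis
    using assms by (auto simp: min_def max_def)
qed

lemma Leps_eq_integral_if_DIM_1:
  fixes \<phi> :: "'a::euclidean_space \<Rightarrow> real"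
  assumes "DIM('a) = 1" "norm e = 1" "0 < \<epsilon>" "1/2 < s" "s < 1"
    and "bounded (range \<phi>)" "\<phi> \<in> borel_measurable borel"
  shows "Leps s \<epsilon> \<phi> x = (LINT t:{\<epsilon><..}|muS s. Lphi \<phi> x (t *\<^sub>R e) (t *\<^sub>R e))"
proof -
  obtain M where M: "\<And>z. \<bar>\<phi> z\<bar> \<le> M"
    using assms(6) unfolding bounded_iff by (metis rangeI real_norm_def)
  define G where "G y y' = (LINT t:{\<epsilon><..}|muS s. Lphi \<phi> x (t *\<^sub>R y) (t *\<^sub>R y'))" for y y'
  note int = muS_Lphi_integrable(1)[OF assms(3-5) M assms(7)]
  have "G (- e) (- e) = G e e"
    unfolding G_def Lphi_def by (simp add: algebra_simps)
  moreover have "G e (- e) + G (- e) e = 2 * G e e"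
  proof -
    have "G e (- e) + G (- e) e
        = (LINT t:{\<epsilon><..}|muS s. Lphi \<phi> x (t *\<^sub>R e) (t *\<^sub>R - e) + Lphi \<phi> x (t *\<^sub>R - e) (t *\<^sub>R e))"
      unfolding G_def by (rule set_integral_add(2)[OF int int, symmetric])
    also have "\<dots> = (LINT t:{\<epsilon><..}|muS s. 2 * Lphi \<phi> x (t *\<^sub>R e) (t *\<^sub>R e))"
      by (simp add: Lphi_def algebra_simps)
    finally show ?thesis by (simp add: G_def)
  qed
  ultimately show ?thesis
    unfolding Leps_def sphere_eq_pair_if_DIM_1[OF assms(1,2)] G_def[symmetric]
    by (rule SUP_INF_pair)
qed

lemma Leps_near_integral_if_DIM_ge_2:
  fixes \<phi> :: "'a::euclidean_space \<Rightarrow> real" and D :: "'a \<Rightarrow> 'a" and H :: "'a \<Rightarrow> ('a \<Rightarrow>\<^sub>L 'a)"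
  assumes s: "1/2 < s" "s < 1" and eps: "0 < \<epsilon>" "\<epsilon> < \<eta>"
    and bnd: "bounded (range \<phi>)" and borel: "\<phi> \<in> borel_measurable borel"
    and grad: "\<And>z. z \<in> cball x \<eta> \<Longrightarrow> (\<phi> has_derivative (\<lambda>h. D z \<bullet> h)) (at z within cball x \<eta>)"
    and hess: "\<And>z. z \<in> cball x \<eta> \<Longrightarrow> (D has_derivative blinfun_apply (H z)) (at z within cball x \<eta>)"
    and H_le: "\<And>z. z \<in> cball x \<eta> \<Longrightarrow> norm (H z) \<le> 2 * C"
    and ob: "bounded (\<phi> ` (- cball x \<eta>))" and px: "D x \<noteq> 0" and N2: "2 \<le> DIM('a)"
  shows "\<bar>Leps s \<epsilon> \<phi> x - (LINT t:{\<epsilon><..}|muS s. Lphi \<phi> x (t *\<^sub>R (D x /\<^sub>R norm (D x))) (t *\<^sub>R (D x /\<^sub>R norm (D x))))\<bar>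
           \<le> Leps_error s \<phi> x \<eta> (norm (D x)) C \<epsilon>"
proof -
  define e where "e = D x /\<^sub>R norm (D x)"
  define G where "G y y' = (LINT t:{\<epsilon><..}|muS s. Lphi \<phi> x (t *\<^sub>R y) (t *\<^sub>R y'))" for y y'
  obtain M where M: "\<And>z. \<bar>\<phi> z\<bar> \<le> M"
    using bnd unfolding bounded_iff by (metis rangeI real_norm_def)
  note int = muS_Lphi_integrable[OF eps(1) s M borel]
  note directional = directional_integral_le_Leps_error[OF s eps bnd borel grad hess H_le ob px N2]
  have "G y e - G e e \<le> Leps_error s \<phi> x \<eta> (norm (D x)) C \<epsilon>" if "y \<in> sphere 0 1" for y
  proof -
    have "G y e - G e e = (LINT t:{\<epsilon><..}|muS s. Lphi \<phi> x (t *\<^sub>R y) (t *\<^sub>R e) - Lphi \<phi> x (t *\<^sub>R e) (t *\<^sub>R e))"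
      unfolding G_def by (rule set_integral_diff(2)[OF int(1) int(1), symmetric])
    also have "\<dots> = (LINT t:{\<epsilon><..}|muS s. 1 * (\<phi> (x + (1 * t) *\<^sub>R y) - \<phi> (x + (1 * t) *\<^sub>R e)))"
      by (simp add: Lphi_def)
    finally show ?thesis using directional[of 1 y] that by (simp add: e_def)
  qed
  moreover have "G e e - G e y' \<le> Leps_error s \<phi> x \<eta> (norm (D x)) C \<epsilon>" if "y' \<in> sphere 0 1" for y'
  proof -
    have "G e e - G e y' = (LINT t:{\<epsilon><..}|muS s. Lphi \<phi> x (t *\<^sub>R e) (t *\<^sub>R e) - Lphi \<phi> x (t *\<^sub>R e) (t *\<^sub>R y'))"
      unfolding G_def by (rule set_integral_diff(2)[OF int(1) int(1), symmetric])
    also have "\<dots> = (LINT t:{\<epsilon><..}|muS s. -1 * (\<phi> (x + (-1 * t) *\<^sub>R y') - \<phi> (x + (-1 * t) *\<^sub>R e)))"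
      by (simp add: Lphi_def)
    finally show ?thesis using directional[of "-1" y'] that by (simp add: e_def)
  qed
  moreover have "e \<in> sphere 0 1" using px by (simp add: e_def)
  moreover have "\<bar>G y y'\<bar> \<le> 4 * M * (Cs s * (\<epsilon> powr (-2 * s) / (2 * s) + \<epsilon> powr (1 - 2 * s) / (2 * s - 1)))"
    for y y'
    unfolding G_def by (rule int(2))
  ultimately show ?thesis
    unfolding Leps_def G_def[symmetric] e_def[symmetric] by (intro SUP_INF_near_saddle)
qed

theorem proposition3p1:
  fixes \<phi> :: "'a::euclidean_space \<Rightarrow> real"
    and x :: 'a and \<eta> s \<epsilon> :: real
    and D :: "'a \<Rightarrow> 'a" and H :: "'a \<Rightarrow> ('a \<Rightarrow>\<^sub>L 'a)"
  assumes s: "1/2 < s" "s < 1"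
    and eta: "\<eta> > 0"
    and bnd: "bounded (range \<phi>)"
    and borel: "\<phi> \<in> borel_measurable borel"
    and grad: "\<And>z. z \<in> cball x \<eta> \<Longrightarrow> (\<phi> has_derivative (\<lambda>h. D z \<bullet> h)) (at z within cball x \<eta>)"
    and hess: "\<And>z. z \<in> cball x \<eta> \<Longrightarrow> (D has_derivative blinfun_apply (H z)) (at z within cball x \<eta>)"
    and hess_cont: "continuous_on (cball x \<eta>) H"
    and outside_bnd: "bounded (\<phi> ` (- cball x \<eta>))"
    and outside_uc: "uniformly_continuous_on (- cball x \<eta>) \<phi>"
    and px: "D x \<noteq> 0"
    and eps: "0 < \<epsilon>" "\<epsilon> < \<eta>"
  shows "\<bar>Leps s \<epsilon> \<phi> x
           - (LINT t:{\<epsilon><..}|muS s. Lphi \<phi> x (t *\<^sub>R (D x /\<^sub>R norm (D x))) (t *\<^sub>R (D x /\<^sub>R norm (D x))))\<bar>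
         \<le> 4 * cs s * s * ((1/2) * (SUP z\<in>ball x \<eta>. norm (H z))) * (\<eta> powr (2 - 2 * s) - \<epsilon> powr (2 - 2 * s))
              * Aeps s \<phi> x \<eta> (norm (D x)) ((1/2) * (SUP z\<in>ball x \<eta>. norm (H z))) \<epsilon>
           + cs s * (1 - s) * (\<eta> powr (-2 * s) + 2 * s / (2 * s - 1) * \<eta> powr (1 - 2 * s))
              * omega \<phi> x \<eta> (Aeps s \<phi> x \<eta> (norm (D x)) ((1/2) * (SUP z\<in>ball x \<eta>. norm (H z))) \<epsilon>)"
proof -
  define C where "C = (1/2) * (SUP z\<in>ball x \<eta>. norm (H z))"
  have H_le: "norm (H z) \<le> 2 * C" if "z \<in> cball x \<eta>" for z
    using norm_le_SUP_ball[OF hess_cont eta that] by (simp add: C_def)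
  have "\<bar>Leps s \<epsilon> \<phi> x
      - (LINT t:{\<epsilon><..}|muS s. Lphi \<phi> x (t *\<^sub>R (D x /\<^sub>R norm (D x))) (t *\<^sub>R (D x /\<^sub>R norm (D x))))\<bar>
      \<le> Leps_error s \<phi> x \<eta> (norm (D x)) C \<epsilon>"
  proof (cases "DIM('a) = 1")
    case True
    have unit: "norm (D x /\<^sub>R norm (D x)) = 1" and "0 \<le> C"
      using px order_trans[OF norm_ge_zero H_le[of x]] eta by simp_all
    then show ?thesis
      using Leps_eq_integral_if_DIM_1[OF True unit eps(1) s bnd borel, of x]
        Leps_error_nonneg[OF eps s _ _ outside_bnd] px
      by simp
  next
    case False
    then have "2 \<le> DIM('a)" using DIM_positive[where 'a = 'a] by linarith
    then show ?thesis
      using Leps_near_integral_if_DIM_ge_2[OF s eps bnd borel grad hess H_le outside_bnd px] by blast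
  qed
  then show ?thesis by (simp add: Leps_error_def C_def)
qed

end
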